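(* Let $X$ be a Tychonoff $\Delta$-space and let $\varphi:X\to Y$ be a quotient continuous surjection onto a Tychonoff space $Y$ such that only finitely many fibers $\varphi^{-1}(y)$, $y\in Y$, have more than one point. Then $Y$ is a $\Delta$-space.
   Context: A topological space $X$ is a $\Delta$-space if for every decreasing sequence $\{D_n:n\in\omega\}$ of subsets of $X$ with $\bigcap_n D_n=\emptyset$ there is a decreasing sequence $\{V_n:n\in\omega\}$ of open subsets of $X$ with $D_n\subseteq V_n$ for all $n$ and $\bigcap_n V_n=\emptyset$. *)

theory Defs
  imports "HOL-Analysis.Analysis"
begin

definition tychonoff_space :: "'a topology \<Rightarrow> bool" where
  "tychonoff_space X \<longleftrightarrow> completely_regular_space X \<and> t1_space X"

definition delta_space :: "'a topology \<Rightarrow> bool" where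
  "delta_space X \<longleftrightarrow>
     (\<forall>D :: nat \<Rightarrow> 'a set.
        (\<forall>n. D n \<subseteq> topspace X) \<and> decseq D \<and> (\<Inter>n. D n) = {} \<longrightarrow>
        (\<exists>V :: nat \<Rightarrow> 'a set. (\<forall>n. openin X (V n)) \<and> decseq V \<and>
            (\<forall>n. D n \<subseteq> V n) \<and> (\<Inter>n. V n) = {}))"

end

theory Submission
  imports Defs
begin

text \<open>Let \<open>F\<close> be the set of points of \<open>Y\<close> with non-trivial fibre; it is finite, hence closed
  since \<open>Y\<close> is \<open>T\<^sub>1\<close> (no other separation property is needed).
  Given \<open>D\<^sub>n\<close> in \<open>Y\<close>, apply the \<open>\<Delta>\<close>-property of \<open>X\<close> to the preimages \<open>\<phi>\<^sup>-\<^sup>1(D\<^sub>n)\<close> to get open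
  \<open>U\<^sub>n\<close>, and remove the closed set \<open>\<phi>\<^sup>-\<^sup>1(F)\<close>. On the rest \<open>\<phi>\<close> is injective, so the images of
  \<open>U\<^sub>n - \<phi>\<^sup>-\<^sup>1(F)\<close> are open and still have empty intersection. Since \<open>F\<close> is finite and
  \<open>\<Inter>D\<^sub>n = {}\<close>, the \<open>D\<^sub>n\<close> eventually miss \<open>F\<close>, so these images cover the \<open>D\<^sub>n\<close> from some
  index on; before it, take the whole space.\<close>

lemma decseq_eventually_disjoint_finite:
  assumes "finite F" "decseq D" "(\<Inter>n. D n) = {}"
  shows "\<exists>N. \<forall>n\<ge>N. D n \<inter> F = {}"
proof -
  have "\<forall>\<^sub>F n in sequentially. \<forall>y\<in>F. y \<notin> D n"
  proof (rule eventually_ball_finite[OF \<open>finite F\<close>], rule ballI)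
    fix y
    from assms(3) obtain m where "y \<notin> D m" by blast
    with \<open>decseq D\<close> show "\<forall>\<^sub>F n in sequentially. y \<notin> D n"
      unfolding eventually_sequentially decseq_def by blast
  qed
  then show ?thesis
    unfolding eventually_sequentially by blast
qed

lemma quotient_map_openin_image_injective:
  assumes "quotient_map X Y f" "openin X W"
    and "\<And>x w. x \<in> topspace X \<Longrightarrow> w \<in> W \<Longrightarrow> f x = f w \<Longrightarrow> x = w"
  shows "openin Y (f ` W)"
proof -
  have "{x \<in> topspace X. f x \<in> f ` W} \<subseteq> W"
    using assms(3) by fastforce
  with assms(1,2) show ?thesis
    unfolding quotient_map_saturated_open by blast
qed

lemma delta_space_from_eventual_cover:
  assumes "\<And>D. \<lbrakk>\<And>n. D n \<subseteq> topspace X; decseq D; (\<Inter>n. D n) = {}\<rbrakk> \<Longrightarrow>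
      \<exists>N V. (\<forall>n. openin X (V n)) \<and> decseq V \<and> (\<forall>n\<ge>N. D n \<subseteq> V n) \<and> (\<Inter>n. V n) = {}"
  shows "delta_space X"
  unfolding delta_space_def
proof (intro allI impI)
  fix D :: "nat \<Rightarrow> _ set"
  assume "(\<forall>n. D n \<subseteq> topspace X) \<and> decseq D \<and> (\<Inter>n. D n) = {}"
  then obtain N V where V: "\<And>n. openin X (V n)" "decseq V" "\<And>n. n \<ge> N \<Longrightarrow> D n \<subseteq> V n"
      "(\<Inter>n. V n) = {}" and D_sub: "\<And>n. D n \<subseteq> topspace X"
    using assms by metis
  define V' where "V' n = (if n < N then topspace X else V n)" for n
  have V_sub: "V n \<subseteq> topspace X" for n
    using V(1) openin_subset by blast
  show "\<exists>V. (\<forall>n. openin X (V n)) \<and> decseq V \<and> (\<forall>n. D n \<subseteq> V n) \<and> (\<Inter>n. V n) = {}"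
  proof (intro exI conjI allI)
    fix n
    show "openin X (V' n)"
      unfolding V'_def using V(1) by simp
    show "D n \<subseteq> V' n"
      unfolding V'_def using D_sub V(3)[of n] by simp
  next
    show "decseq V'"
    proof (rule decseq_SucI)
      fix n
      show "V' (Suc n) \<subseteq> V' n"
        unfolding V'_def using decseq_SucD[OF V(2), of n] V_sub by auto
    qed
  next
    have "(\<Inter>n. V' n) \<subseteq> V n" for n
      using decseqD[OF V(2), of n "max n N"] unfolding V'_def by (auto split: if_splits)
    then show "(\<Inter>n. V' n) = {}"
      using V(4) by blast
  qed
qed

lemma quotient_map_images_off_closed:
  assumes f: "quotient_map X Y f" and "closedin Y F"
    and inj: "\<And>a b. a \<in> topspace X \<Longrightarrow> b \<in> topspace X \<Longrightarrow> f a = f b \<Longrightarrow> f a \<notin> F \<Longrightarrow> a = b"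
    and U: "\<And>n. openin X (U n)" "decseq U" "(\<Inter>n. U n) = {}"
    and V_def: "V = (\<lambda>n. f ` (U n - {x \<in> topspace X. f x \<in> F}))"
  shows "\<forall>n. openin Y (V n)" and "decseq V" and "(\<Inter>n. V n) = {}"
proof -
  define W where "W n = U n - {x \<in> topspace X. f x \<in> F}" for n
  have V_eq: "V n = f ` W n" for n
    unfolding V_def W_def ..
  have "closedin X {x \<in> topspace X. f x \<in> F}"
    using closedin_continuous_map_preimage[OF quotient_imp_continuous_map[OF f] \<open>closedin Y F\<close>] .
  then have W_open: "openin X (W n)" for n
    unfolding W_def using U(1) by (simp add: openin_diff)
  have W_sub: "W n \<subseteq> topspace X" for n
    using openin_subset[OF U(1)] unfolding W_def by blast
  have W_antimono: "W j \<subseteq> W i" if "i \<le> j" for i j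
    using decseqD[OF U(2) that] unfolding W_def by blast
  have W_inj: "x = w" if "x \<in> topspace X" "w \<in> W n" "f x = f w" for x w n
  proof -
    have "w \<in> topspace X" "f w \<notin> F"
      using \<open>w \<in> W n\<close> W_sub unfolding W_def by auto
    then show ?thesis
      using inj[of w x] that by simp
  qed
  show "\<forall>n. openin Y (V n)"
  proof
    fix n
    show "openin Y (V n)"
      unfolding V_eq using quotient_map_openin_image_injective[OF f W_open W_inj[of _ _ n]] .
  qed
  show "decseq V"
    unfolding V_eq decseq_def using W_antimono by (simp add: image_mono)
  show "(\<Inter>n. V n) = {}"
  proof (rule ccontr)
    assume "(\<Inter>n. V n) \<noteq> {}"
    then obtain y where y: "\<And>n. y \<in> f ` W n"
      unfolding V_eq by blast
    from y[of 0] obtain x where x: "x \<in> W 0" "f x = y"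
      by blast
    have "x \<in> W n" for n
    proof -
      from y[of n] obtain z where z: "z \<in> W n" "f z = y"
        by blast
      then have "z = x"
        using W_inj[of z x 0] x W_sub[of n] by auto
      with z show ?thesis by simp
    qed
    then show False
      using U(3) unfolding W_def by blast
  qed
qed

lemma delta_space_quotient_map_injective_off_finite_closed:
  assumes "delta_space X" and f: "quotient_map X Y f"
    and "finite F" "closedin Y F"
    and inj: "\<And>a b. a \<in> topspace X \<Longrightarrow> b \<in> topspace X \<Longrightarrow> f a = f b \<Longrightarrow> f a \<notin> F \<Longrightarrow> a = b"
  shows "delta_space Y"
proof (rule delta_space_from_eventual_cover)
  fix D :: "nat \<Rightarrow> _ set"
  assume D_sub: "\<And>n. D n \<subseteq> topspace Y" and "decseq D" and "(\<Inter>n. D n) = {}"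
  define E where "E n = {x \<in> topspace X. f x \<in> D n}" for n
  have "\<forall>n. E n \<subseteq> topspace X"
    unfolding E_def by auto
  moreover have "decseq E"
    using \<open>decseq D\<close> unfolding E_def decseq_def by auto
  moreover have "(\<Inter>n. E n) = {}"
    using \<open>(\<Inter>n. D n) = {}\<close> unfolding E_def by auto
  ultimately obtain U where U: "\<And>n. openin X (U n)" "decseq U" "\<And>n. E n \<subseteq> U n" "(\<Inter>n. U n) = {}"
    using \<open>delta_space X\<close> unfolding delta_space_def by (metis (no_types, lifting))
  obtain N where N: "\<And>n. n \<ge> N \<Longrightarrow> D n \<inter> F = {}"
    using decseq_eventually_disjoint_finite[OF \<open>finite F\<close> \<open>decseq D\<close> \<open>(\<Inter>n. D n) = {}\<close>] by blast
  define V where "V = (\<lambda>n. f ` (U n - {x \<in> topspace X. f x \<in> F}))"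
  note V = quotient_map_images_off_closed[OF f \<open>closedin Y F\<close> inj U(1,2,4) V_def]
  have D_cover: "\<forall>n\<ge>N. D n \<subseteq> V n"
  proof (intro allI impI subsetI)
    fix n y
    assume "n \<ge> N" "y \<in> D n"
    then have "y \<in> f ` topspace X"
      using D_sub quotient_imp_surjective_map[OF f] by blast
    then obtain x where x: "x \<in> topspace X" "f x = y"
      by blast
    then have "x \<in> U n"
      using U(3) \<open>y \<in> D n\<close> unfolding E_def by blast
    moreover have "f x \<notin> F"
      using N[OF \<open>n \<ge> N\<close>] x \<open>y \<in> D n\<close> by blast
    ultimately show "y \<in> V n"
      unfolding V_def using x by (intro image_eqI[of y f x]) auto
  qed
  show "\<exists>N V. (\<forall>n. openin Y (V n)) \<and> decseq V \<and> (\<forall>n\<ge>N. D n \<subseteq> V n) \<and> (\<Inter>n. V n) = {}"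
    using V D_cover by (intro exI[of _ N] exI[of _ V]) blast
qed

theorem proposition5p2:
  fixes X :: "'a topology" and Y :: "'b topology" and \<phi> :: "'a \<Rightarrow> 'b"
  assumes "tychonoff_space X" and "delta_space X"
    and "tychonoff_space Y"
    and "continuous_map X Y \<phi>" and "quotient_map X Y \<phi>"
    and "finite {y \<in> topspace Y. \<exists>a b. a \<in> topspace X \<and> b \<in> topspace X \<and> a \<noteq> b \<and> \<phi> a = y \<and> \<phi> b = y}"
  shows "delta_space Y"
proof -
  define F where "F = {y \<in> topspace Y. \<exists>a b. a \<in> topspace X \<and> b \<in> topspace X \<and> a \<noteq> b \<and> \<phi> a = y \<and> \<phi> b = y}"
  have "finite F"
    using assms(6) unfolding F_def .
  have "closedin Y F"
  proof -
    have "t1_space Y"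
      using \<open>tychonoff_space Y\<close> unfolding tychonoff_space_def by blast
    then show ?thesis
      using \<open>finite F\<close> t1_space_closedin_finite unfolding F_def by fastforce
  qed
  have fibres_trivial_off_F: "a = b"
    if "a \<in> topspace X" "b \<in> topspace X" "\<phi> a = \<phi> b" "\<phi> a \<notin> F" for a b
  proof (rule ccontr)
    assume "a \<noteq> b"
    have "\<phi> a \<in> topspace Y"
      using continuous_map_image_subset_topspace[OF \<open>continuous_map X Y \<phi>\<close>] \<open>a \<in> topspace X\<close> by blast
    with that \<open>a \<noteq> b\<close> have "\<phi> a \<in> F"
      unfolding F_def by auto
    with \<open>\<phi> a \<notin> F\<close> show False by contradiction
  qed
  show ?thesis
    using delta_space_quotient_map_injective_off_finite_closed[OF \<open>delta_space X\<close> \<open>quotient_map X Y \<phi>\<close>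
        \<open>finite F\<close> \<open>closedin Y F\<close> fibres_trivial_off_F] .
qed

end
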